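(* Let $\mathscr{A}\in\mathbb{R}^{n\times n\times n_3}$, $\mathscr{V}\in\mathbb{R}^{n\times s\times n_3}$, and suppose $m$ steps of the tensor tubal-global Arnoldi process described in the context have been run (without breakdown). Then the tensors $\mathscr{V}_1,\dots,\mathscr{V}_m$ form a T-orthonormal basis of the tubal-global Krylov subspace $\mathscr{TK}^g_m(\mathscr{A},\mathscr{V})$.
   Context: All tensors are real third-order arrays. $\widehat{\mathscr{A}}=\mathscr{A}\times_3F_{n_3}$ denotes the tensor obtained by applying the discrete Fourier transform ($F_{n_3}$ with entries $\omega^{(i-1)(j-1)}$, $\omega=e^{-2\pi\mathrm{i}/n_3}$) to each tube; its frontal slices $\hat A^{(k)}$ are the Fourier slices. T-product: $\mathscr{A}\star\mathscr{B}$ has Fourier slices $\hat A^{(k)}\hat B^{(k)}$; $\mathscr{A}^0$ is the identity tensor (first frontal slice $I_n$, others zero) and $\mathscr{A}^{i}=\mathscr{A}\star\mathscr{A}^{i-1}$. Transpose $\mathscr{A}^T$: transpose each frontal slice and reverse the order of frontal slices $2,\dots,n_3$. A tube is an element of $\mathbb{R}^{1\times1\times n_3}$; $\mathbf{e}$ is the tube with entries $(1,0,\dots,0)$ and $\mathbf{o}$ the zero tube. For a tube $\mathbf{a}$, $\mathbf{a}\divideontimes\mathscr{B}$ is the tensor whose $(i,j)$ tube is $\mathbf{a}\star\mathscr{B}(i,j,:)$. T-trace: the tube whose $k$-th Fourier slice is the trace of the $k$-th Fourier slice. Tubal inner product: $\langle\mathscr{X},\mathscr{Y}\rangle_T=\text{T-trace}(\mathscr{X}^T\star\mathscr{Y})$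 for $\mathscr{X},\mathscr{Y}\in\mathbb{R}^{n\times s\times n_3}$. A family $\mathscr{V}_1,\dots,\mathscr{V}_m$ is T-orthonormal if $\langle\mathscr{V}_i,\mathscr{V}_j\rangle_T=\mathbf{e}$ for $i=j$ and $\mathbf{o}$ for $i\ne j$. Tubal-global Krylov subspace: $\mathscr{TK}^g_m(\mathscr{A},\mathscr{V})=\{\sum_{i=1}^m\mathbf{a}_i\divideontimes(\mathscr{A}^{i-1}\star\mathscr{V}):\ \mathbf{a}_i\in\mathbb{R}^{1\times1\times n_3}\}$. Normalization of $\mathscr{W}$: $\mathbf{a}$ is the tube whose $k$-th Fourier coefficient is $\|\hat W^{(k)}\|_F$ (breakdown if one is zero), and $\mathscr{Q}$ has Fourier slices $\hat W^{(k)}/\|\hat W^{(k)}\|_F$; output $[\mathscr{Q},\mathbf{a}]$. Tubal-global Arnoldi process: $[\mathscr{V}_1,\mathbf{r}_{1,1}]=\mathrm{Normalization}(\mathscr{V})$; for $j=1,\dots,m$: $\mathscr{W}=\mathscr{A}\star\mathscr{V}_j$; for $i=1,\dots,j$: $\mathbf{h}_{i,j}=\langle\mathscr{V}_i,\mathscr{W}\rangle_T$, $\mathscr{W}\leftarrow\mathscr{W}-\mathbf{h}_{i,j}\divideontimes\mathscr{V}_i$; then $[\mathscr{V}_{j+1},\mathbf{h}_{j+1,j}]=\mathrm{Normalization}(\mathscr{W})$. *)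

theory Defs
  imports Complex_Main "HOL-Library.Function_Algebras"
begin

text \<open>A third-order real tensor of size n1 x n2 x n3 is represented as a
function X :: nat => nat => nat => real (0-based indices i j t), which is zero outside
the box i < n1, j < n2, t < n3. A tube is a function nat => real, zero for t >= n3.\<close>

type_synonym tensor = "nat \<Rightarrow> nat \<Rightarrow> nat \<Rightarrow> real"
type_synonym tube = "nat \<Rightarrow> real"

definition is_tensor :: "nat \<Rightarrow> nat \<Rightarrow> nat \<Rightarrow> tensor \<Rightarrow> bool" where
  "is_tensor n1 n2 n3 X \<longleftrightarrow> (\<forall>i j t. \<not> (i < n1 \<and> j < n2 \<and> t < n3) \<longrightarrow> X i j t = 0)"

definition is_tube :: "nat \<Rightarrow> tube \<Rightarrow> bool" where
  "is_tube n3 a \<longleftrightarrow> (\<forall>t. n3 \<le> t \<longrightarrow> a t = 0)"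

definition omega :: "nat \<Rightarrow> complex" where
  "omega n3 = cis (- 2 * pi / real n3)"

definition tfft :: "nat \<Rightarrow> tensor \<Rightarrow> nat \<Rightarrow> nat \<Rightarrow> nat \<Rightarrow> complex" where
  "tfft n3 X i j k = (\<Sum>t<n3. complex_of_real (X i j t) * omega n3 ^ (t * k))"

definition tube_fft :: "nat \<Rightarrow> tube \<Rightarrow> nat \<Rightarrow> complex" where
  "tube_fft n3 a k = (\<Sum>t<n3. complex_of_real (a t) * omega n3 ^ (t * k))"

text \<open>Inverse transform of prescribed Fourier slices (real part taken, the result being a
real tensor); truncated to t < n3.\<close>
definition tifft :: "nat \<Rightarrow> (nat \<Rightarrow> nat \<Rightarrow> nat \<Rightarrow> complex) \<Rightarrow> tensor" where
  "tifft n3 Y i j t = (if t < n3 then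
      Re ((\<Sum>k<n3. Y i j k * cnj (omega n3) ^ (t * k)) / of_nat n3) else 0)"

definition tube_ifft :: "nat \<Rightarrow> (nat \<Rightarrow> complex) \<Rightarrow> tube" where
  "tube_ifft n3 y t = (if t < n3 then
      Re ((\<Sum>k<n3. y k * cnj (omega n3) ^ (t * k)) / of_nat n3) else 0)"

definition tprod :: "nat \<Rightarrow> nat \<Rightarrow> tensor \<Rightarrow> tensor \<Rightarrow> tensor" where
  "tprod p n3 A B = tifft n3 (\<lambda>i j k. \<Sum>l<p. tfft n3 A i l k * tfft n3 B l j k)"

definition tident :: "nat \<Rightarrow> tensor" where
  "tident n i j t = (if i = j \<and> i < n \<and> t = 0 then 1 else 0)"

primrec tpow :: "nat \<Rightarrow> nat \<Rightarrow> tensor \<Rightarrow> nat \<Rightarrow> tensor" where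
  "tpow n n3 A 0 = tident n"
| "tpow n n3 A (Suc k) = tprod n n3 A (tpow n n3 A k)"

text \<open>Transpose: transpose each frontal slice, reverse the order of slices 2..n3.\<close>
definition ttrans :: "nat \<Rightarrow> tensor \<Rightarrow> tensor" where
  "ttrans n3 X i j t = (if t < n3 then X j i ((n3 - t) mod n3) else 0)"

definition tube_e :: tube where "tube_e t = (if t = 0 then 1 else 0)"
definition tube_o :: tube where "tube_o t = 0"

definition tube_mult :: "nat \<Rightarrow> tube \<Rightarrow> tensor \<Rightarrow> tensor" where
  "tube_mult n3 a B = tifft n3 (\<lambda>i j k. tube_fft n3 a k * tfft n3 B i j k)"

definition ttrace :: "nat \<Rightarrow> nat \<Rightarrow> tensor \<Rightarrow> tube" where
  "ttrace s n3 Z = tube_ifft n3 (\<lambda>k. \<Sum>i<s. tfft n3 Z i i k)"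

definition tinner :: "nat \<Rightarrow> nat \<Rightarrow> nat \<Rightarrow> tensor \<Rightarrow> tensor \<Rightarrow> tube" where
  "tinner n s n3 X Y = ttrace s n3 (tprod n n3 (ttrans n3 X) Y)"

definition fslice_norm :: "nat \<Rightarrow> nat \<Rightarrow> nat \<Rightarrow> tensor \<Rightarrow> nat \<Rightarrow> real" where
  "fslice_norm n s n3 W k = sqrt (\<Sum>i<n. \<Sum>j<s. (cmod (tfft n3 W i j k))\<^sup>2)"

definition normalization :: "nat \<Rightarrow> nat \<Rightarrow> nat \<Rightarrow> tensor \<Rightarrow> tensor \<times> tube" where
  "normalization n s n3 W =
     (tifft n3 (\<lambda>i j k. tfft n3 W i j k / complex_of_real (fslice_norm n s n3 W k)),
      tube_ifft n3 (\<lambda>k. complex_of_real (fslice_norm n s n3 W k)))"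

definition breakdown :: "nat \<Rightarrow> nat \<Rightarrow> nat \<Rightarrow> tensor \<Rightarrow> bool" where
  "breakdown n s n3 W \<longleftrightarrow> (\<exists>k<n3. fslice_norm n s n3 W k = 0)"

primrec mgs :: "nat \<Rightarrow> nat \<Rightarrow> nat \<Rightarrow> (nat \<Rightarrow> tensor) \<Rightarrow> tensor \<Rightarrow> nat \<Rightarrow> tensor" where
  "mgs n s n3 Vs W 0 = W"
| "mgs n s n3 Vs W (Suc i) =
     (let W' = mgs n s n3 Vs W i
      in W' - tube_mult n3 (tinner n s n3 (Vs (Suc i)) W') (Vs (Suc i)))"

definition arnoldi_W :: "nat \<Rightarrow> nat \<Rightarrow> nat \<Rightarrow> tensor \<Rightarrow> tensor list \<Rightarrow> tensor" where
  "arnoldi_W n s n3 A Vs =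
     mgs n s n3 (\<lambda>i. Vs ! (i - 1)) (tprod n n3 A (last Vs)) (length Vs)"

text \<open>arnoldi n s n3 A V j = [V_1, ..., V_(j+1)], produced by j steps of the process.\<close>
primrec arnoldi :: "nat \<Rightarrow> nat \<Rightarrow> nat \<Rightarrow> tensor \<Rightarrow> tensor \<Rightarrow> nat \<Rightarrow> tensor list" where
  "arnoldi n s n3 A V 0 = [fst (normalization n s n3 V)]"
| "arnoldi n s n3 A V (Suc j) =
     (let Vs = arnoldi n s n3 A V j
      in Vs @ [fst (normalization n s n3 (arnoldi_W n s n3 A Vs))])"

text \<open>V_j (for j >= 1).\<close>
definition arnoldi_V :: "nat \<Rightarrow> nat \<Rightarrow> nat \<Rightarrow> tensor \<Rightarrow> tensor \<Rightarrow> nat \<Rightarrow> tensor" where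
  "arnoldi_V n s n3 A V j = last (arnoldi n s n3 A V (j - 1))"

definition no_breakdown :: "nat \<Rightarrow> nat \<Rightarrow> nat \<Rightarrow> tensor \<Rightarrow> tensor \<Rightarrow> nat \<Rightarrow> bool" where
  "no_breakdown n s n3 A V m \<longleftrightarrow>
     \<not> breakdown n s n3 V \<and>
     (\<forall>j<m. \<not> breakdown n s n3 (arnoldi_W n s n3 A (arnoldi n s n3 A V j)))"

definition tgKrylov :: "nat \<Rightarrow> nat \<Rightarrow> nat \<Rightarrow> nat \<Rightarrow> tensor \<Rightarrow> tensor \<Rightarrow> tensor set" where
  "tgKrylov n s n3 m A V =
     {X. \<exists>a. (\<forall>i. is_tube n3 (a i)) \<and>
          X = (\<Sum>i=1..m. tube_mult n3 (a i) (tprod n n3 (tpow n n3 A (i - 1)) V))}"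

definition tspan :: "nat \<Rightarrow> nat \<Rightarrow> (nat \<Rightarrow> tensor) \<Rightarrow> tensor set" where
  "tspan n3 m Vs = {X. \<exists>b. (\<forall>j. is_tube n3 (b j)) \<and> X = (\<Sum>j=1..m. tube_mult n3 (b j) (Vs j))}"

definition T_orthonormal :: "nat \<Rightarrow> nat \<Rightarrow> nat \<Rightarrow> nat \<Rightarrow> (nat \<Rightarrow> tensor) \<Rightarrow> bool" where
  "T_orthonormal n s n3 m Vs \<longleftrightarrow>
     (\<forall>i\<in>{1..m}. \<forall>j\<in>{1..m}.
        tinner n s n3 (Vs i) (Vs j) = (if i = j then tube_e else tube_o))"

definition T_independent :: "nat \<Rightarrow> nat \<Rightarrow> (nat \<Rightarrow> tensor) \<Rightarrow> bool" where
  "T_independent n3 m Vs \<longleftrightarrow>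
     (\<forall>b. (\<forall>j. is_tube n3 (b j)) \<longrightarrow> (\<Sum>j=1..m. tube_mult n3 (b j) (Vs j)) = 0 \<longrightarrow>
        (\<forall>j\<in>{1..m}. b j = tube_o))"

definition T_orthonormal_basis :: "nat \<Rightarrow> nat \<Rightarrow> nat \<Rightarrow> nat \<Rightarrow> (nat \<Rightarrow> tensor) \<Rightarrow> tensor set \<Rightarrow> bool" where
  "T_orthonormal_basis n s n3 m Vs S \<longleftrightarrow>
     T_orthonormal n s n3 m Vs \<and> T_independent n3 m Vs \<and> (\<forall>j\<in>{1..m}. Vs j \<in> S) \<and>
     tspan n3 m Vs = S"

end

theory Submission
  imports Defs
begin

(* The discrete Fourier transform along the tubes turns T-products, tube scalings, transposes
   and tubal inner products into slice-wise matrix products, scalings, conjugate transposes and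
   Frobenius inner products, and real tubes correspond exactly to conjugate-symmetric Fourier
   sequences. In the Fourier domain the tubal-global Arnoldi process is therefore the global
   Arnoldi process run on all frontal slices at once, the scalars of slice k being collected into
   conjugate-symmetric sequences. Orthonormality then follows slice by slice from modified
   Gram-Schmidt, and the Arnoldi relation A V_j = nu_j V_(j+1) + sum_(i<=j) h_(i,j) V_i with
   nonvanishing nu_j shows by induction that V_1, ..., V_j and V, A V, ..., A^(j-1) V generate the
   same module over these scalars. *)

section \<open>Roots of unity and the Fourier transform of tubes\<close>

lemma omega_pow: "omega n3 ^ x = cis (- 2 * pi * real x / real n3)"
  unfolding omega_def DeMoivre by (simp add: field_simps)

lemma omega_pow_n3: "0 < n3 \<Longrightarrow> omega n3 ^ n3 = 1"
  unfolding omega_pow by (simp add: cis_cnj[symmetric])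

lemma norm_omega_pow: "cmod (omega n3 ^ x) = 1"
  unfolding omega_pow by simp

lemma omega_pow_reflect:
  assumes "0 < n3" "k < n3"
  shows "omega n3 ^ (t * ((n3 - k) mod n3)) = cnj (omega n3 ^ (t * k))"
proof (cases "k = 0")
  case True
  then show ?thesis by simp
next
  case False
  then have reflect: "(n3 - k) mod n3 = n3 - k"
    using assms by simp
  have "omega n3 ^ (t * (n3 - k)) * omega n3 ^ (t * k) = omega n3 ^ (t * n3)"
    using assms by (simp add: power_add[symmetric] diff_mult_distrib2)
  also have "\<dots> = 1"
    using omega_pow_n3[OF assms(1)] by (simp add: power_mult mult.commute[of t])
  finally have inverse: "omega n3 ^ (t * (n3 - k)) * omega n3 ^ (t * k) = 1" .
  have unimodular: "cnj (omega n3 ^ (t * k)) * omega n3 ^ (t * k) = 1"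
    using complex_norm_square[of "omega n3 ^ (t * k)"] norm_omega_pow[of n3 "t * k"]
    by (simp add: mult.commute)
  have "omega n3 ^ (t * k) \<noteq> 0"
    using norm_omega_pow[of n3 "t * k"] by (metis norm_zero zero_neq_one)
  with inverse unimodular show ?thesis
    unfolding reflect by (metis mult_right_cancel)
qed

lemma cis_fraction_eq_one_iff:
  assumes "u < n3" "v < n3"
  shows "cis (2 * pi * (real v - real u) / real n3) = 1 \<longleftrightarrow> u = v"
proof
  assume "cis (2 * pi * (real v - real u) / real n3) = 1"
  then have "cos (2 * pi * (real v - real u) / real n3) = 1"
    by (simp add: complex_eq_iff)
  then obtain q :: int where "2 * pi * (real v - real u) / real n3 = real_of_int q * 2 * pi"
    by (subst (asm) cos_one_2pi_int) blast
  then have "real_of_int (int v - int u) = real_of_int (q * int n3)"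
    unfolding of_int_diff of_int_mult using assms by (simp add: nonzero_divide_eq_eq)
  then have multiple: "int v - int u = q * int n3"
    by (simp only: of_int_eq_iff)
  then have "\<bar>q\<bar> * n3 = \<bar>int v - int u\<bar>"
    by (simp add: abs_mult)
  also have "\<dots> < int n3"
    using assms by linarith
  finally have "q = 0"
    using assms by (simp add: mult_less_cancel_right2)
  with multiple show "u = v"
    by simp
qed simp

lemma sum_omega_pow_orthogonal:
  assumes "0 < n3" "u < n3" "v < n3"
  shows "(\<Sum>t<n3. omega n3 ^ (t * u) * cnj (omega n3) ^ (t * v)) = (if u = v then of_nat n3 else 0)"
proof -
  define z where "z = omega n3 ^ u * cnj (omega n3) ^ v"
  have "omega n3 ^ (t * u) * cnj (omega n3) ^ (t * v) = z ^ t" for t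
    by (simp add: z_def power_mult_distrib power_mult mult.commute[of t])
  then have "(\<Sum>t<n3. omega n3 ^ (t * u) * cnj (omega n3) ^ (t * v)) = (\<Sum>t<n3. z ^ t)"
    by simp
  moreover have z_cis: "z = cis (2 * pi * (real v - real u) / real n3)"
    unfolding z_def omega_pow complex_cnj_power[symmetric] cis_cnj cis_mult
    by (simp add: field_simps diff_divide_distrib)
  moreover have "z ^ n3 = 1"
  proof -
    have "z ^ n3 = cis (2 * pi * real_of_int (int v - int u))"
      unfolding z_cis DeMoivre using assms by simp
    also have "\<dots> = 1"
      by (rule cis_multiple_2pi) simp
    finally show ?thesis .
  qed
  ultimately show ?thesis
    using cis_fraction_eq_one_iff[OF assms(2,3)] by (simp add: geometric_sum)
qed

lemma sum_reflect:
  assumes "0 < (n3::nat)"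
  shows "(\<Sum>k<n3. g ((n3 - k) mod n3)) = (\<Sum>k<n3. g k)"
  by (rule sum.reindex_bij_witness[where i="\<lambda>k. (n3 - k) mod n3" and j="\<lambda>k. (n3 - k) mod n3"])
     (use assms in \<open>auto simp: mod_if\<close>)

lemma sum_delta_zero:
  assumes "0 < (n3::nat)"
  shows "(\<Sum>t<n3. complex_of_real (if t = 0 then 1 else 0) * f t) = f 0"
proof -
  have "(\<Sum>t<n3. complex_of_real (if t = 0 then 1 else 0) * f t) = (\<Sum>t<n3. if t = 0 then f t else 0)"
    by (rule sum.cong) auto
  with assms show ?thesis
    by (simp add: sum.delta)
qed

(* Fourier coefficients of real tubes are exactly the conjugate-symmetric sequences; these play
   the role of the scalars in the Fourier domain. *)
definition conj_symmetric :: "nat \<Rightarrow> (nat \<Rightarrow> complex) \<Rightarrow> bool" where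
  "conj_symmetric n3 f \<longleftrightarrow> (\<forall>k<n3. f ((n3 - k) mod n3) = cnj (f k))"

lemma conj_symmetric_mult:
  "conj_symmetric n3 f \<Longrightarrow> conj_symmetric n3 g \<Longrightarrow> conj_symmetric n3 (\<lambda>k. f k * g k)"
  unfolding conj_symmetric_def by simp

lemma conj_symmetric_add:
  "conj_symmetric n3 f \<Longrightarrow> conj_symmetric n3 g \<Longrightarrow> conj_symmetric n3 (\<lambda>k. f k + g k)"
  unfolding conj_symmetric_def by simp

lemma conj_symmetric_diff:
  "conj_symmetric n3 f \<Longrightarrow> conj_symmetric n3 g \<Longrightarrow> conj_symmetric n3 (\<lambda>k. f k - g k)"
  unfolding conj_symmetric_def by simp

lemma conj_symmetric_divide:
  "conj_symmetric n3 f \<Longrightarrow> conj_symmetric n3 g \<Longrightarrow> conj_symmetric n3 (\<lambda>k. f k / g k)"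
  unfolding conj_symmetric_def by simp

lemma conj_symmetric_of_real:
  "(\<And>k. k < n3 \<Longrightarrow> r ((n3 - k) mod n3) = r k) \<Longrightarrow> conj_symmetric n3 (\<lambda>k. complex_of_real (r k))"
  unfolding conj_symmetric_def by simp

lemma conj_symmetric_zero: "conj_symmetric n3 (\<lambda>k. 0)"
  unfolding conj_symmetric_def by simp

lemma conj_symmetric_one: "conj_symmetric n3 (\<lambda>k. 1)"
  unfolding conj_symmetric_def by simp

lemma conj_symmetric_if:
  "conj_symmetric n3 f \<Longrightarrow> conj_symmetric n3 g \<Longrightarrow> conj_symmetric n3 (\<lambda>k. if P then f k else g k)"
  unfolding conj_symmetric_def by simp

lemma conj_symmetric_sum:
  "(\<And>x. x \<in> I \<Longrightarrow> conj_symmetric n3 (f x)) \<Longrightarrow> conj_symmetric n3 (\<lambda>k. \<Sum>x\<in>I. f x k)"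
  unfolding conj_symmetric_def by (simp add: cnj_sum)

lemma tube_fft_reflect:
  assumes "0 < n3" "k < n3"
  shows "tube_fft n3 a ((n3 - k) mod n3) = cnj (tube_fft n3 a k)"
  unfolding tube_fft_def cnj_sum using omega_pow_reflect[OF assms] by simp

lemma conj_symmetric_tube_fft: "0 < n3 \<Longrightarrow> conj_symmetric n3 (tube_fft n3 a)"
  unfolding conj_symmetric_def using tube_fft_reflect by blast

lemma inverse_dft_real:
  assumes n3: "0 < n3" and y: "conj_symmetric n3 y"
  shows "cnj (\<Sum>l<n3. y l * cnj (omega n3) ^ (t * l)) = (\<Sum>l<n3. y l * cnj (omega n3) ^ (t * l))"
proof -
  have "cnj (\<Sum>l<n3. y l * cnj (omega n3) ^ (t * l)) = (\<Sum>l<n3. cnj (y l) * omega n3 ^ (t * l))"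
    unfolding cnj_sum by (simp add: complex_cnj_power)
  also have "\<dots> = (\<Sum>l<n3. (\<lambda>l. y l * cnj (omega n3) ^ (t * l)) ((n3 - l) mod n3))"
  proof (rule sum.cong[OF refl])
    fix l assume "l \<in> {..<n3}"
    then have "cnj (y l) = y ((n3 - l) mod n3)"
      and "omega n3 ^ (t * l) = cnj (omega n3) ^ (t * ((n3 - l) mod n3))"
      using y arg_cong[OF omega_pow_reflect[OF n3, of l t], of cnj]
      by (simp_all add: conj_symmetric_def)
    then show "cnj (y l) * omega n3 ^ (t * l) = (\<lambda>l. y l * cnj (omega n3) ^ (t * l)) ((n3 - l) mod n3)"
      by simp
  qed
  also have "\<dots> = (\<Sum>l<n3. y l * cnj (omega n3) ^ (t * l))"
    by (rule sum_reflect[OF n3])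
  finally show ?thesis .
qed

lemma tube_fft_tube_ifft:
  assumes n3: "0 < n3" and y: "conj_symmetric n3 y" and k: "k < n3"
  shows "tube_fft n3 (tube_ifft n3 y) k = y k"
proof -
  define z where "z t = (\<Sum>l<n3. y l * cnj (omega n3) ^ (t * l)) / of_nat n3" for t
  have "cnj (z t) = z t" for t
    unfolding z_def using inverse_dft_real[OF n3 y] by simp
  then have real: "complex_of_real (Re (z t)) = z t" for t
    by (simp add: Reals_cnj_iff[symmetric])
  have "tube_fft n3 (tube_ifft n3 y) k = (\<Sum>t<n3. z t * omega n3 ^ (t * k))"
    unfolding tube_fft_def tube_ifft_def z_def[symmetric] using real by simp
  also have "\<dots> = (\<Sum>t<n3. \<Sum>l<n3. y l * (omega n3 ^ (t * k) * cnj (omega n3) ^ (t * l)) / of_nat n3)"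
    by (rule sum.cong[OF refl]) (simp add: z_def sum_divide_distrib sum_distrib_left mult_ac)
  also have "\<dots> = (\<Sum>l<n3. y l * (\<Sum>t<n3. omega n3 ^ (t * k) * cnj (omega n3) ^ (t * l)) / of_nat n3)"
    unfolding sum_distrib_left sum_divide_distrib by (rule sum.swap)
  also have "\<dots> = (\<Sum>l<n3. if l = k then y k else 0)"
    by (rule sum.cong[OF refl]) (use n3 k in \<open>auto simp: sum_omega_pow_orthogonal\<close>)
  also have "\<dots> = y k"
    using k by simp
  finally show ?thesis .
qed

lemma tube_ifft_tube_fft:
  assumes n3: "0 < n3" and a: "is_tube n3 a"
  shows "tube_ifft n3 (tube_fft n3 a) = a"
proof
  fix t
  show "tube_ifft n3 (tube_fft n3 a) t = a t"
  proof (cases "t < n3")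
    case False
    with a show ?thesis
      unfolding is_tube_def tube_ifft_def by simp
  next
    case True
    have "(\<Sum>k<n3. tube_fft n3 a k * cnj (omega n3) ^ (t * k))
        = (\<Sum>k<n3. \<Sum>u<n3. complex_of_real (a u) * (omega n3 ^ (k * u) * cnj (omega n3) ^ (k * t)))"
      unfolding tube_fft_def
      by (rule sum.cong[OF refl]) (simp add: sum_distrib_left sum_distrib_right mult_ac)
    also have "\<dots> = (\<Sum>u<n3. complex_of_real (a u) * (\<Sum>k<n3. omega n3 ^ (k * u) * cnj (omega n3) ^ (k * t)))"
      unfolding sum_distrib_left by (rule sum.swap)
    also have "\<dots> = (\<Sum>u<n3. if u = t then complex_of_real (a t) * of_nat n3 else 0)"
      by (rule sum.cong[OF refl]) (use n3 True in \<open>auto simp: sum_omega_pow_orthogonal\<close>)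
    also have "\<dots> = complex_of_real (a t) * of_nat n3"
      using True by simp
    finally show ?thesis
      unfolding tube_ifft_def using True n3 by simp
  qed
qed

lemma tube_ifft_cong: "(\<And>k. k < n3 \<Longrightarrow> y k = y' k) \<Longrightarrow> tube_ifft n3 y = tube_ifft n3 y'"
  unfolding tube_ifft_def by (intro ext) simp

lemma is_tube_tube_ifft: "is_tube n3 (tube_ifft n3 y)"
  unfolding is_tube_def tube_ifft_def by simp

lemma tube_fft_tube_e: "0 < n3 \<Longrightarrow> tube_fft n3 tube_e k = 1"
  unfolding tube_fft_def tube_e_def by (simp add: sum_delta_zero)

lemma tube_fft_tube_o: "tube_fft n3 tube_o k = 0"
  unfolding tube_fft_def tube_o_def by simp

section \<open>Fourier slices of the tensor operations\<close>

type_synonym fslices = "nat \<Rightarrow> nat \<Rightarrow> nat \<Rightarrow> complex"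

definition slice_lmult :: "nat \<Rightarrow> fslices \<Rightarrow> fslices \<Rightarrow> fslices" where
  "slice_lmult p M Y = (\<lambda>i j k. \<Sum>q<p. M i q k * Y q j k)"

lemma slice_lmult_assoc:
  "slice_lmult n M (slice_lmult p N Y) = slice_lmult p (slice_lmult n M N) Y"
proof (intro ext)
  fix i j k
  have "(\<Sum>q<n. M i q k * (\<Sum>r<p. N q r k * Y r j k)) = (\<Sum>q<n. \<Sum>r<p. M i q k * N q r k * Y r j k)"
    by (simp add: sum_distrib_left mult.assoc)
  also have "\<dots> = (\<Sum>r<p. \<Sum>q<n. M i q k * N q r k * Y r j k)"
    by (rule sum.swap)
  also have "\<dots> = (\<Sum>r<p. (\<Sum>q<n. M i q k * N q r k) * Y r j k)"
    by (simp add: sum_distrib_right)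
  finally show "slice_lmult n M (slice_lmult p N Y) i j k = slice_lmult p (slice_lmult n M N) Y i j k"
    unfolding slice_lmult_def .
qed

lemma tfft_eq_tube_fft: "tfft n3 X i j k = tube_fft n3 (X i j) k"
  unfolding tfft_def tube_fft_def ..

lemma tifft_eq_tube_ifft: "tifft n3 Y i j = tube_ifft n3 (Y i j)"
  unfolding tifft_def tube_ifft_def by (rule ext) simp

lemma is_tube_tifft: "is_tube n3 (tifft n3 Y i j)"
  unfolding tifft_eq_tube_ifft by (rule is_tube_tube_ifft)

lemma conj_symmetric_tfft: "0 < n3 \<Longrightarrow> conj_symmetric n3 (tfft n3 X i j)"
  unfolding tfft_eq_tube_fft[abs_def] by (rule conj_symmetric_tube_fft)

lemma tfft_tifft:
  "0 < n3 \<Longrightarrow> (\<And>i j. conj_symmetric n3 (Y i j)) \<Longrightarrow> k < n3 \<Longrightarrow> tfft n3 (tifft n3 Y) i j k = Y i j k"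
  unfolding tfft_eq_tube_fft tifft_eq_tube_ifft by (rule tube_fft_tube_ifft)

lemma tensor_eqI_tfft:
  assumes n3: "0 < n3" and X: "\<And>i j. is_tube n3 (X i j)" and Y: "\<And>i j. is_tube n3 (Y i j)"
    and eq: "\<And>i j k. k < n3 \<Longrightarrow> tfft n3 X i j k = tfft n3 Y i j k"
  shows "X = Y"
proof (intro ext)
  fix i j t
  have "X i j = tube_ifft n3 (tube_fft n3 (X i j))"
    using X n3 by (simp add: tube_ifft_tube_fft)
  also have "\<dots> = tube_ifft n3 (tube_fft n3 (Y i j))"
    by (rule tube_ifft_cong) (use eq in \<open>simp add: tfft_eq_tube_fft\<close>)
  also have "\<dots> = Y i j"
    using Y n3 by (simp add: tube_ifft_tube_fft)
  finally show "X i j t = Y i j t"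
    by simp
qed

lemma tfft_tprod:
  assumes "0 < n3" "k < n3"
  shows "tfft n3 (tprod p n3 A B) i j k = slice_lmult p (tfft n3 A) (tfft n3 B) i j k"
  unfolding tprod_def slice_lmult_def
  by (rule tfft_tifft[OF assms(1) _ assms(2)])
     (intro conj_symmetric_sum conj_symmetric_mult conj_symmetric_tfft assms(1))

lemma tfft_tube_mult:
  assumes "0 < n3" "k < n3"
  shows "tfft n3 (tube_mult n3 a B) i j k = tube_fft n3 a k * tfft n3 B i j k"
  unfolding tube_mult_def
  by (rule tfft_tifft[OF assms(1) _ assms(2)])
     (intro conj_symmetric_mult conj_symmetric_tfft conj_symmetric_tube_fft assms(1))

lemma tfft_diff: "tfft n3 (X - Y) i j k = tfft n3 X i j k - tfft n3 Y i j k"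
  unfolding tfft_def by (simp add: sum_subtractf algebra_simps)

lemma sum_tensor_apply: "(\<Sum>x\<in>I. F x) i j t = (\<Sum>x\<in>I. F x i j t)"
  for F :: "'b \<Rightarrow> tensor"
  by (induction I rule: infinite_finite_induct) auto

lemma tfft_sum: "tfft n3 (\<Sum>x\<in>I. F x) i j k = (\<Sum>x\<in>I. tfft n3 (F x) i j k)"
  unfolding tfft_def sum_tensor_apply by (simp add: sum_distrib_right) (rule sum.swap)

lemma tfft_ttrans:
  assumes n3: "0 < n3"
  shows "tfft n3 (ttrans n3 X) i j k = cnj (tfft n3 X j i k)"
proof -
  have "tfft n3 (ttrans n3 X) i j k = (\<Sum>t<n3. complex_of_real (X j i ((n3 - t) mod n3)) * omega n3 ^ (t * k))"
    unfolding tfft_def ttrans_def by simp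
  also have "\<dots> = (\<Sum>t<n3. (\<lambda>u. complex_of_real (X j i u) * omega n3 ^ (((n3 - u) mod n3) * k)) ((n3 - t) mod n3))"
  proof (rule sum.cong[OF refl])
    fix t assume "t \<in> {..<n3}"
    then have "(n3 - (n3 - t) mod n3) mod n3 = t"
      using n3 by (auto simp: mod_if)
    then show "complex_of_real (X j i ((n3 - t) mod n3)) * omega n3 ^ (t * k) =
        (\<lambda>u. complex_of_real (X j i u) * omega n3 ^ (((n3 - u) mod n3) * k)) ((n3 - t) mod n3)"
      by simp
  qed
  also have "\<dots> = (\<Sum>u<n3. complex_of_real (X j i u) * omega n3 ^ (((n3 - u) mod n3) * k))"
    by (rule sum_reflect[OF n3])
  also have "\<dots> = (\<Sum>u<n3. complex_of_real (X j i u) * cnj (omega n3 ^ (u * k)))"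
    by (rule sum.cong[OF refl]) (use omega_pow_reflect[OF n3] in \<open>simp add: mult.commute\<close>)
  also have "\<dots> = cnj (tfft n3 X j i k)"
    unfolding tfft_def cnj_sum by simp
  finally show ?thesis .
qed

lemma tfft_tident:
  assumes "0 < n3"
  shows "tfft n3 (tident n) i j k = (if i = j \<and> i < n then 1 else 0)"
proof (cases "i = j \<and> i < n")
  case True
  with assms show ?thesis
    by (simp add: tfft_def tident_def sum_delta_zero)
next
  case False
  then have never: "\<And>t. (i = j \<and> i < n \<and> t = 0) \<longleftrightarrow> False"
    by blast
  from False show ?thesis
    unfolding tfft_def tident_def never by simp
qed

lemma tfft_tprod_tident:
  assumes "0 < n3" "k < n3" "is_tensor n s n3 V"
  shows "tfft n3 (tprod n n3 (tident n) V) i j k = tfft n3 V i j k"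
proof -
  have "tfft n3 (tprod n n3 (tident n) V) i j k = (\<Sum>q<n. (if i = q \<and> i < n then 1 else 0) * tfft n3 V q j k)"
    using assms(1,2) by (simp add: tfft_tprod slice_lmult_def tfft_tident)
  also have "\<dots> = (if i < n then tfft n3 V i j k else 0)"
    by (simp add: if_distrib[of "\<lambda>x. x * _"] sum.delta cong: if_cong)
  also have "\<dots> = tfft n3 V i j k"
    using assms(3) unfolding is_tensor_def tfft_def by simp
  finally show ?thesis .
qed

lemma tfft_tprod_tpow:
  assumes "0 < n3" "k < n3"
  shows "tfft n3 (tprod n n3 (tpow n n3 A (Suc r)) V) i j k
    = slice_lmult n (tfft n3 A) (tfft n3 (tprod n n3 (tpow n n3 A r) V)) i j k"
proof -
  let ?T = "tpow n n3 A r"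
  have "tfft n3 (tprod n n3 (tprod n n3 A ?T) V) i j k
      = slice_lmult n (slice_lmult n (tfft n3 A) (tfft n3 ?T)) (tfft n3 V) i j k"
    by (simp only: tfft_tprod[OF assms] slice_lmult_def)
  also have "\<dots> = slice_lmult n (tfft n3 A) (slice_lmult n (tfft n3 ?T) (tfft n3 V)) i j k"
    by (simp only: slice_lmult_assoc)
  also have "\<dots> = slice_lmult n (tfft n3 A) (tfft n3 (tprod n n3 ?T V)) i j k"
    by (simp only: tfft_tprod[OF assms] slice_lmult_def)
  finally show ?thesis
    by simp
qed

lemma fslice_norm_reflect:
  assumes "0 < n3" "k < n3"
  shows "fslice_norm n s n3 W ((n3 - k) mod n3) = fslice_norm n s n3 W k"
  unfolding fslice_norm_def tfft_eq_tube_fft tube_fft_reflect[OF assms] by simp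

lemma conj_symmetric_fslice_norm:
  "0 < n3 \<Longrightarrow> conj_symmetric n3 (\<lambda>k. complex_of_real (fslice_norm n s n3 W k))"
  by (intro conj_symmetric_of_real fslice_norm_reflect)

lemma tfft_normalization:
  assumes "0 < n3" "k < n3"
  shows "tfft n3 (fst (normalization n s n3 W)) i j k
    = tfft n3 W i j k / complex_of_real (fslice_norm n s n3 W k)"
  unfolding normalization_def fst_conv
  by (rule tfft_tifft[OF assms(1) _ assms(2)])
     (intro conj_symmetric_divide conj_symmetric_tfft conj_symmetric_fslice_norm assms(1))

lemma is_tube_normalization: "is_tube n3 (fst (normalization n s n3 W) i j)"
  unfolding normalization_def fst_conv by (rule is_tube_tifft)

section \<open>Slice inner products and T-orthonormality\<close>

definition slice_inner :: "nat \<Rightarrow> nat \<Rightarrow> fslices \<Rightarrow> fslices \<Rightarrow> nat \<Rightarrow> complex" where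
  "slice_inner n s X Y k = (\<Sum>i<n. \<Sum>j<s. cnj (X i j k) * Y i j k)"

lemma tube_fft_tinner:
  assumes "0 < n3" "k < n3"
  shows "tube_fft n3 (tinner n s n3 X Y) k = slice_inner n s (tfft n3 X) (tfft n3 Y) k"
proof -
  have "tube_fft n3 (tinner n s n3 X Y) k = (\<Sum>j<s. tfft n3 (tprod n n3 (ttrans n3 X) Y) j j k)"
    unfolding tinner_def ttrace_def
    by (rule tube_fft_tube_ifft[OF assms(1) _ assms(2)])
       (intro conj_symmetric_sum conj_symmetric_tfft assms(1))
  also have "\<dots> = (\<Sum>j<s. \<Sum>i<n. cnj (tfft n3 X i j k) * tfft n3 Y i j k)"
    using assms by (simp add: tfft_tprod slice_lmult_def tfft_ttrans)
  also have "\<dots> = slice_inner n s (tfft n3 X) (tfft n3 Y) k"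
    unfolding slice_inner_def by (rule sum.swap)
  finally show ?thesis .
qed

lemma is_tube_tinner: "is_tube n3 (tinner n s n3 X Y)"
  unfolding tinner_def ttrace_def by (rule is_tube_tube_ifft)

lemma slice_inner_cnj: "slice_inner n s Y X k = cnj (slice_inner n s X Y k)"
  unfolding slice_inner_def cnj_sum by (simp add: mult.commute)

lemma slice_inner_self:
  "slice_inner n s (tfft n3 W) (tfft n3 W) k = complex_of_real ((fslice_norm n s n3 W k)\<^sup>2)"
proof -
  have "(fslice_norm n s n3 W k)\<^sup>2 = (\<Sum>i<n. \<Sum>j<s. (cmod (tfft n3 W i j k))\<^sup>2)"
    unfolding fslice_norm_def by (simp add: sum_nonneg)
  then show ?thesis
    unfolding slice_inner_def by (simp add: complex_norm_square[symmetric] mult.commute[of "cnj _"])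
qed

lemma slice_inner_cong:
  "(\<And>i j. Y i j k = Y' i j k) \<Longrightarrow> slice_inner n s X Y k = slice_inner n s X Y' k"
  unfolding slice_inner_def by simp

lemma slice_inner_diff_scale:
  "slice_inner n s X (\<lambda>i j k. Y i j k - c k * Z i j k) k = slice_inner n s X Y k - c k * slice_inner n s X Z k"
  unfolding slice_inner_def
  by (simp add: right_diff_distrib sum_subtractf sum_distrib_left mult.left_commute)

lemma slice_inner_divide:
  "slice_inner n s X (\<lambda>i j k. Y i j k / d k) k = slice_inner n s X Y k / d k"
  unfolding slice_inner_def by (simp add: sum_divide_distrib)

lemma slice_inner_sum_scale:
  "slice_inner n s X (\<lambda>i j k. \<Sum>l\<in>L. c l k * Y l i j k) k = (\<Sum>l\<in>L. c l k * slice_inner n s X (Y l) k)"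
  by (induction L rule: infinite_finite_induct)
     (simp_all add: slice_inner_def distrib_left sum.distrib sum_distrib_left mult.left_commute)

lemma tube_eq_iff_tube_fft:
  "0 < n3 \<Longrightarrow> is_tube n3 a \<Longrightarrow> is_tube n3 b \<Longrightarrow> a = b \<longleftrightarrow> (\<forall>k<n3. tube_fft n3 a k = tube_fft n3 b k)"
  by (metis tube_ifft_cong tube_ifft_tube_fft)

lemma T_orthonormal_iff_slice_inner:
  assumes n3: "0 < n3"
  shows "T_orthonormal n s n3 m Vs \<longleftrightarrow> (\<forall>a\<in>{1..m}. \<forall>b\<in>{1..m}. \<forall>k<n3.
      slice_inner n s (tfft n3 (Vs a)) (tfft n3 (Vs b)) k = (if a = b then 1 else 0))"
proof -
  have "is_tube n3 (if a = b then tube_e else tube_o)" for a b :: nat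
    using n3 by (simp add: is_tube_def tube_e_def tube_o_def)
  then have "tinner n s n3 (Vs a) (Vs b) = (if a = b then tube_e else tube_o) \<longleftrightarrow>
      (\<forall>k<n3. slice_inner n s (tfft n3 (Vs a)) (tfft n3 (Vs b)) k = (if a = b then 1 else 0))" for a b
    using n3 by (simp add: tube_eq_iff_tube_fft is_tube_tinner tube_fft_tinner tube_fft_tube_e
        tube_fft_tube_o if_distrib[of "\<lambda>x. tube_fft n3 x _"] cong: if_cong)
  then show ?thesis
    unfolding T_orthonormal_def by blast
qed

lemma T_independent_if_T_orthonormal:
  assumes n3: "0 < n3" and orth: "T_orthonormal n s n3 m Vs"
  shows "T_independent n3 m Vs"
  unfolding T_independent_def
proof (intro allI impI ballI)
  fix b :: "nat \<Rightarrow> tube" and a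
  assume b: "\<forall>j. is_tube n3 (b j)" and zero: "(\<Sum>j=1..m. tube_mult n3 (b j) (Vs j)) = 0"
    and a: "a \<in> {1..m}"
  have "tube_fft n3 (b a) k = 0" if k: "k < n3" for k
  proof -
    have "0 = slice_inner n s (tfft n3 (Vs a)) (tfft n3 (\<Sum>j=1..m. tube_mult n3 (b j) (Vs j))) k"
      unfolding zero by (simp add: tfft_def slice_inner_def)
    also have "\<dots> = slice_inner n s (tfft n3 (Vs a))
        (\<lambda>i j k. \<Sum>l=1..m. tube_fft n3 (b l) k * tfft n3 (Vs l) i j k) k"
      using n3 k by (intro slice_inner_cong) (simp add: tfft_sum tfft_tube_mult)
    also have "\<dots> = (\<Sum>j=1..m. tube_fft n3 (b j) k * slice_inner n s (tfft n3 (Vs a)) (tfft n3 (Vs j)) k)"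
      by (rule slice_inner_sum_scale)
    also have "\<dots> = (\<Sum>j=1..m. if j = a then tube_fft n3 (b a) k else 0)"
      using orth a k by (intro sum.cong) (auto simp: T_orthonormal_iff_slice_inner[OF n3])
    also have "\<dots> = tube_fft n3 (b a) k"
      using a by (simp add: sum.delta')
    finally show ?thesis
      by simp
  qed
  then show "b a = tube_o"
    using n3 b by (simp add: tube_eq_iff_tube_fft tube_fft_tube_o is_tube_def tube_o_def)
qed

section \<open>Spans over conjugate-symmetric scalars\<close>

definition fspan :: "nat \<Rightarrow> nat \<Rightarrow> (nat \<Rightarrow> fslices) \<Rightarrow> fslices set" where
  "fspan n3 m F = {Y. \<exists>c. (\<forall>l. conj_symmetric n3 (c l)) \<and>
     (\<forall>i j k. k < n3 \<longrightarrow> Y i j k = (\<Sum>l=1..m. c l k * F l i j k))}"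

lemma fspanI:
  "(\<And>l. conj_symmetric n3 (c l)) \<Longrightarrow> (\<And>i j k. k < n3 \<Longrightarrow> Y i j k = (\<Sum>l=1..m. c l k * F l i j k))
    \<Longrightarrow> Y \<in> fspan n3 m F"
  unfolding fspan_def by blast

lemma fspanE:
  assumes "Y \<in> fspan n3 m F"
  obtains c where "\<And>l. conj_symmetric n3 (c l)"
    and "\<And>i j k. k < n3 \<Longrightarrow> Y i j k = (\<Sum>l=1..m. c l k * F l i j k)"
  using assms unfolding fspan_def by blast

lemma fspan_cong:
  "Y \<in> fspan n3 m F \<Longrightarrow> (\<And>i j k. k < n3 \<Longrightarrow> Y' i j k = Y i j k) \<Longrightarrow> Y' \<in> fspan n3 m F"
  unfolding fspan_def by auto

lemma fspan_zero: "(\<lambda>i j k. 0) \<in> fspan n3 m F"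
  by (rule fspanI[where c = "\<lambda>l k. 0"]) (simp_all add: conj_symmetric_zero)

lemma fspan_add:
  assumes "Y \<in> fspan n3 m F" "Z \<in> fspan n3 m F"
  shows "(\<lambda>i j k. Y i j k + Z i j k) \<in> fspan n3 m F"
proof -
  obtain c where "\<And>l. conj_symmetric n3 (c l)"
    and "\<And>i j k. k < n3 \<Longrightarrow> Y i j k = (\<Sum>l=1..m. c l k * F l i j k)"
    using assms(1) by (rule fspanE) blast
  moreover obtain d where "\<And>l. conj_symmetric n3 (d l)"
    and "\<And>i j k. k < n3 \<Longrightarrow> Z i j k = (\<Sum>l=1..m. d l k * F l i j k)"
    using assms(2) by (rule fspanE) blast
  ultimately show ?thesis
    by (intro fspanI[where c = "\<lambda>l k. c l k + d l k"])
       (simp_all add: conj_symmetric_add sum.distrib distrib_right)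
qed

lemma fspan_diff:
  assumes "Y \<in> fspan n3 m F" "Z \<in> fspan n3 m F"
  shows "(\<lambda>i j k. Y i j k - Z i j k) \<in> fspan n3 m F"
proof -
  obtain c where "\<And>l. conj_symmetric n3 (c l)"
    and "\<And>i j k. k < n3 \<Longrightarrow> Y i j k = (\<Sum>l=1..m. c l k * F l i j k)"
    using assms(1) by (rule fspanE) blast
  moreover obtain d where "\<And>l. conj_symmetric n3 (d l)"
    and "\<And>i j k. k < n3 \<Longrightarrow> Z i j k = (\<Sum>l=1..m. d l k * F l i j k)"
    using assms(2) by (rule fspanE) blast
  ultimately show ?thesis
    by (intro fspanI[where c = "\<lambda>l k. c l k - d l k"])
       (simp_all add: conj_symmetric_diff sum_subtractf left_diff_distrib)
qed

lemma fspan_scale: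
  assumes "conj_symmetric n3 f" "Y \<in> fspan n3 m F"
  shows "(\<lambda>i j k. f k * Y i j k) \<in> fspan n3 m F"
proof -
  obtain c where "\<And>l. conj_symmetric n3 (c l)"
    and "\<And>i j k. k < n3 \<Longrightarrow> Y i j k = (\<Sum>l=1..m. c l k * F l i j k)"
    using assms(2) by (rule fspanE) blast
  with assms(1) show ?thesis
    by (intro fspanI[where c = "\<lambda>l k. f k * c l k"])
       (simp_all add: conj_symmetric_mult sum_distrib_left mult.assoc)
qed

lemma fspan_sum:
  "(\<And>x. x \<in> I \<Longrightarrow> Y x \<in> fspan n3 m F) \<Longrightarrow> (\<lambda>i j k. \<Sum>x\<in>I. Y x i j k) \<in> fspan n3 m F"
proof (induction I rule: infinite_finite_induct)
  case (insert x I)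
  then have "(\<lambda>i j k. Y x i j k + (\<Sum>x\<in>I. Y x i j k)) \<in> fspan n3 m F"
    by (intro fspan_add) auto
  with insert.hyps show ?case
    by simp
qed (simp_all add: fspan_zero)

lemma fspan_base:
  assumes "l \<in> {1..m}"
  shows "F l \<in> fspan n3 m F"
proof (rule fspanI[where c = "\<lambda>r k. if r = l then 1 else 0"])
  show "conj_symmetric n3 (\<lambda>k. if r = l then 1 else 0)" for r
    by (intro conj_symmetric_if conj_symmetric_one conj_symmetric_zero)
  show "F l i j k = (\<Sum>r=1..m. (if r = l then 1 else 0) * F r i j k)" for i j k
    using assms by (simp add: if_distrib[of "\<lambda>x. x * _"] sum.delta' cong: if_cong)
qed

lemma fspan_subset_fspan:
  assumes "\<And>l. l \<in> {1..m} \<Longrightarrow> F l \<in> fspan n3 m' G"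
  shows "fspan n3 m F \<subseteq> fspan n3 m' G"
proof
  fix Y assume "Y \<in> fspan n3 m F"
  then obtain c where c: "\<And>l. conj_symmetric n3 (c l)"
    and Y: "\<And>i j k. k < n3 \<Longrightarrow> Y i j k = (\<Sum>l=1..m. c l k * F l i j k)"
    by (rule fspanE) blast
  have "(\<lambda>i j k. \<Sum>l=1..m. c l k * F l i j k) \<in> fspan n3 m' G"
    by (intro fspan_sum fspan_scale c assms)
  then show "Y \<in> fspan n3 m' G"
    by (rule fspan_cong) (rule Y)
qed

lemma fspan_mono: "m \<le> m' \<Longrightarrow> fspan n3 m F \<subseteq> fspan n3 m' F"
  by (intro fspan_subset_fspan fspan_base) auto

lemma fspan_slice_lmult:
  assumes Y: "Y \<in> fspan n3 m F" and MF: "\<And>l. l \<in> {1..m} \<Longrightarrow> slice_lmult n M (F l) \<in> fspan n3 m' G"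
  shows "slice_lmult n M Y \<in> fspan n3 m' G"
proof -
  obtain c where c: "\<And>l. conj_symmetric n3 (c l)"
    and Y: "\<And>i j k. k < n3 \<Longrightarrow> Y i j k = (\<Sum>l=1..m. c l k * F l i j k)"
    using Y by (rule fspanE) blast
  have "(\<lambda>i j k. \<Sum>l=1..m. c l k * slice_lmult n M (F l) i j k) \<in> fspan n3 m' G"
    by (intro fspan_sum fspan_scale c MF)
  then show ?thesis
  proof (rule fspan_cong)
    fix i j k assume "k < n3"
    then have "slice_lmult n M Y i j k = (\<Sum>q<n. \<Sum>l=1..m. M i q k * (c l k * F l q j k))"
      by (simp add: slice_lmult_def Y sum_distrib_left)
    also have "\<dots> = (\<Sum>l=1..m. c l k * slice_lmult n M (F l) i j k)"
      by (subst sum.swap) (simp add: slice_lmult_def sum_distrib_left mult.left_commute)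
    finally show "slice_lmult n M Y i j k = (\<Sum>l=1..m. c l k * slice_lmult n M (F l) i j k)" .
  qed
qed

lemma is_tube_tube_mult: "is_tube n3 (tube_mult n3 a X i j)"
  unfolding tube_mult_def by (rule is_tube_tifft)

lemma tfft_in_fspan_if_in_tspan:
  assumes n3: "0 < n3" and X: "X \<in> tspan n3 m R"
  shows "tfft n3 X \<in> fspan n3 m (\<lambda>l. tfft n3 (R l))"
proof -
  obtain b where "X = (\<Sum>j=1..m. tube_mult n3 (b j) (R j))"
    using X unfolding tspan_def by blast
  with n3 show ?thesis
    by (intro fspanI[where c = "\<lambda>l. tube_fft n3 (b l)"])
       (simp_all add: conj_symmetric_tube_fft tfft_sum tfft_tube_mult)
qed

lemma tspan_eq_fspan:
  assumes n3: "0 < n3"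
  shows "tspan n3 m R = {X. (\<forall>i j. is_tube n3 (X i j)) \<and> tfft n3 X \<in> fspan n3 m (\<lambda>l. tfft n3 (R l))}"
proof (intro set_eqI iffI CollectI conjI allI)
  fix X assume X: "X \<in> tspan n3 m R"
  then show "tfft n3 X \<in> fspan n3 m (\<lambda>l. tfft n3 (R l))"
    by (rule tfft_in_fspan_if_in_tspan[OF n3])
  fix i j
  from X obtain b where "X = (\<Sum>j=1..m. tube_mult n3 (b j) (R j))"
    unfolding tspan_def by blast
  then show "is_tube n3 (X i j)"
    using is_tube_tube_mult by (simp add: is_tube_def sum_tensor_apply)
next
  fix X assume "X \<in> {X. (\<forall>i j. is_tube n3 (X i j)) \<and> tfft n3 X \<in> fspan n3 m (\<lambda>l. tfft n3 (R l))}"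
  then have X: "\<And>i j. is_tube n3 (X i j)" and "tfft n3 X \<in> fspan n3 m (\<lambda>l. tfft n3 (R l))"
    by auto
  from this(2) obtain c where c: "\<And>l. conj_symmetric n3 (c l)"
    and coeffs: "\<And>i j k. k < n3 \<Longrightarrow> tfft n3 X i j k = (\<Sum>l=1..m. c l k * tfft n3 (R l) i j k)"
    by (rule fspanE) blast
  have "X = (\<Sum>l=1..m. tube_mult n3 (tube_ifft n3 (c l)) (R l))"
  proof (rule tensor_eqI_tfft[OF n3 X])
    show "is_tube n3 ((\<Sum>l=1..m. tube_mult n3 (tube_ifft n3 (c l)) (R l)) i j)" for i j
      using is_tube_tube_mult by (simp add: is_tube_def sum_tensor_apply)
    show "tfft n3 X i j k = tfft n3 (\<Sum>l=1..m. tube_mult n3 (tube_ifft n3 (c l)) (R l)) i j k"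
      if "k < n3" for i j k
      using n3 that c by (simp add: coeffs tfft_sum tfft_tube_mult tube_fft_tube_ifft)
  qed
  then show "X \<in> tspan n3 m R"
    unfolding tspan_def by (intro CollectI exI[of _ "\<lambda>l. tube_ifft n3 (c l)"] conjI allI is_tube_tube_ifft)
qed

lemma tspan_base:
  assumes "0 < n3" "\<And>i j. is_tube n3 (R l i j)" "l \<in> {1..m}"
  shows "R l \<in> tspan n3 m R"
proof -
  have "(\<lambda>l. tfft n3 (R l)) l \<in> fspan n3 m (\<lambda>l. tfft n3 (R l))"
    using assms(3) by (rule fspan_base)
  with assms(1,2) show ?thesis
    by (simp add: tspan_eq_fspan)
qed

lemma slice_lmult_in_fspan_Suc:
  assumes "conj_symmetric n3 \<nu>"
    and "(\<lambda>i j k. slice_lmult n M (G r) i j k - \<nu> k * G (Suc r) i j k) \<in> fspan n3 r G"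
  shows "slice_lmult n M (G r) \<in> fspan n3 (Suc r) G"
proof -
  have "(\<lambda>i j k. (slice_lmult n M (G r) i j k - \<nu> k * G (Suc r) i j k) + \<nu> k * G (Suc r) i j k)
      \<in> fspan n3 (Suc r) G"
    using assms fspan_mono[of r "Suc r"] by (intro fspan_add fspan_scale fspan_base) auto
  then show ?thesis
    by (rule fspan_cong) simp
qed

lemma krylov_step_in_fspan:
  assumes F: "F r \<in> fspan n3 r G"
    and MG: "\<And>q. q \<in> {1..r} \<Longrightarrow> slice_lmult n M (G q) \<in> fspan n3 (Suc q) G"
    and power: "\<And>i j k. k < n3 \<Longrightarrow> F (Suc r) i j k = slice_lmult n M (F r) i j k"
  shows "F (Suc r) \<in> fspan n3 (Suc r) G"
proof -
  have "slice_lmult n M (F r) \<in> fspan n3 (Suc r) G"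
  proof (rule fspan_slice_lmult[OF F])
    fix q assume "q \<in> {1..r}"
    then show "slice_lmult n M (G q) \<in> fspan n3 (Suc r) G"
      using MG[of q] fspan_mono[of "Suc q" "Suc r"] by auto
  qed
  then show ?thesis
    by (rule fspan_cong) (rule power)
qed

lemma arnoldi_step_in_fspan:
  assumes \<nu>: "conj_symmetric n3 \<nu>" "\<And>k. k < n3 \<Longrightarrow> \<nu> k \<noteq> 0"
    and G: "\<And>q. q \<in> {1..r} \<Longrightarrow> G q \<in> fspan n3 q F"
    and power: "\<And>q i j k. q \<in> {1..r} \<Longrightarrow> k < n3 \<Longrightarrow> F (Suc q) i j k = slice_lmult n M (F q) i j k"
    and arnoldi: "(\<lambda>i j k. slice_lmult n M (G r) i j k - \<nu> k * G (Suc r) i j k) \<in> fspan n3 r G"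
    and r: "1 \<le> r"
  shows "G (Suc r) \<in> fspan n3 (Suc r) F"
proof -
  have MG: "slice_lmult n M (G r) \<in> fspan n3 (Suc r) F"
  proof (rule fspan_slice_lmult[of "G r" n3 r F])
    show "G r \<in> fspan n3 r F"
      using G r by simp
    fix q assume q: "q \<in> {1..r}"
    have "F (Suc q) \<in> fspan n3 (Suc r) F"
      using q by (intro fspan_base) auto
    then show "slice_lmult n M (F q) \<in> fspan n3 (Suc r) F"
      by (rule fspan_cong) (use power q in auto)
  qed
  have "fspan n3 r G \<subseteq> fspan n3 (Suc r) F"
  proof (rule fspan_subset_fspan)
    fix q assume "q \<in> {1..r}"
    then show "G q \<in> fspan n3 (Suc r) F"
      using G[of q] fspan_mono[of q "Suc r"] by auto
  qed
  with arnoldi have "(\<lambda>i j k. slice_lmult n M (G r) i j k - \<nu> k * G (Suc r) i j k) \<in> fspan n3 (Suc r) F"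
    by blast
  with MG have "(\<lambda>i j k. slice_lmult n M (G r) i j k
      - (slice_lmult n M (G r) i j k - \<nu> k * G (Suc r) i j k)) \<in> fspan n3 (Suc r) F"
    by (rule fspan_diff)
  with \<nu>(1) have "(\<lambda>i j k. 1 / \<nu> k * (slice_lmult n M (G r) i j k
      - (slice_lmult n M (G r) i j k - \<nu> k * G (Suc r) i j k))) \<in> fspan n3 (Suc r) F"
    by (intro fspan_scale conj_symmetric_divide conj_symmetric_one)
  then show ?thesis
    by (rule fspan_cong) (use \<nu>(2) in simp)
qed

(* Induction on l shows that F 1, ..., F l and G 1, ..., G l generate the same fspan: the Krylov
   step A F_l = F_(l+1) and the Arnoldi relation A G_l = nu_l G_(l+1) + (element of fspan l G)
   each express the new generator of one family through the first l+1 generators of the other. *)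
lemma fspan_eq_if_arnoldi_relation:
  fixes F G :: "nat \<Rightarrow> fslices" and \<nu> :: "nat \<Rightarrow> nat \<Rightarrow> complex"
  assumes \<nu>: "\<And>r. r < m \<Longrightarrow> conj_symmetric n3 (\<nu> r)" "\<And>r k. r < m \<Longrightarrow> k < n3 \<Longrightarrow> \<nu> r k \<noteq> 0"
    and start: "\<And>i j k. k < n3 \<Longrightarrow> F 1 i j k = \<nu> 0 k * G 1 i j k"
    and power: "\<And>r i j k. 1 \<le> r \<Longrightarrow> r < m \<Longrightarrow> k < n3 \<Longrightarrow> F (Suc r) i j k = slice_lmult n M (F r) i j k"
    and arnoldi: "\<And>r. 1 \<le> r \<Longrightarrow> r < m \<Longrightarrow>
      (\<lambda>i j k. slice_lmult n M (G r) i j k - \<nu> r k * G (Suc r) i j k) \<in> fspan n3 r G"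
  shows "fspan n3 m F = fspan n3 m G"
proof -
  have "F l \<in> fspan n3 l G \<and> G l \<in> fspan n3 l F" if "1 \<le> l" "l \<le> m" for l
    using that
  proof (induction l rule: less_induct)
    case (less l)
    show ?case
    proof (cases "l = 1")
      case True
      have "F 1 \<in> fspan n3 1 G"
        using less.prems start by (intro fspan_cong[OF fspan_scale[OF \<nu>(1) fspan_base]]) auto
      moreover have "G 1 \<in> fspan n3 1 F"
        using less.prems start \<nu>
        by (intro fspan_cong[OF fspan_scale[OF conj_symmetric_divide[OF conj_symmetric_one \<nu>(1)]
              fspan_base, of 0]]) auto
      ultimately show ?thesis
        using True by simp
    next
      case False
      then obtain r where l: "l = Suc r" and r: "1 \<le> r" "r < m"
        using less.prems by (cases l) auto
      have IH: "F q \<in> fspan n3 q G" "G q \<in> fspan n3 q F" if "q \<in> {1..r}" for q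
        using less.IH[of q] that l r by auto
      have "F (Suc r) \<in> fspan n3 (Suc r) G"
      proof (rule krylov_step_in_fspan)
        show "F r \<in> fspan n3 r G"
          using IH(1)[of r] r by simp
        show "slice_lmult n M (G q) \<in> fspan n3 (Suc q) G" if "q \<in> {1..r}" for q
          using that r by (intro slice_lmult_in_fspan_Suc[OF \<nu>(1) arnoldi]) auto
        show "F (Suc r) i j k = slice_lmult n M (F r) i j k" if "k < n3" for i j k
          using power r that by simp
      qed
      moreover have "G (Suc r) \<in> fspan n3 (Suc r) F"
        by (rule arnoldi_step_in_fspan[OF \<nu>(1)[OF r(2)] \<nu>(2)[OF r(2)] IH(2) _ arnoldi[OF r] r(1)])
           (use power r in auto)
      ultimately show ?thesis
        unfolding l ..
    qed
  qed
  then have "F l \<in> fspan n3 m G \<and> G l \<in> fspan n3 m F" if "l \<in> {1..m}" for l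
    using that fspan_mono[of l m] by auto
  then show ?thesis
    by (intro equalityI fspan_subset_fspan) auto
qed

section \<open>The tubal-global Arnoldi process\<close>

lemma length_arnoldi: "length (arnoldi n s n3 A V j) = Suc j"
  by (induction j) (simp_all add: Let_def)

lemma nth_arnoldi: "i \<le> j \<Longrightarrow> arnoldi n s n3 A V j ! i = arnoldi_V n s n3 A V (Suc i)"
proof (induction j arbitrary: i)
  case 0
  then show ?case
    by (simp add: arnoldi_V_def)
next
  case (Suc j)
  show ?case
  proof (cases "i \<le> j")
    case True
    with Suc show ?thesis
      by (simp add: Let_def nth_append length_arnoldi)
  next
    case False
    with Suc.prems have "i = Suc j"
      by simp
    then show ?thesis
      by (simp add: Let_def nth_append length_arnoldi arnoldi_V_def)
  qed
qed

lemma mgs_cong: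
  "(\<And>l. 1 \<le> l \<Longrightarrow> l \<le> i \<Longrightarrow> Vs l = Vs' l) \<Longrightarrow> mgs n s n3 Vs W i = mgs n s n3 Vs' W i"
  by (induction i) (simp_all add: Let_def)

(* For j = 0 this is V itself, so that V_(j+1) is the normalization of the residual for every j. *)
definition arnoldi_residual :: "nat \<Rightarrow> nat \<Rightarrow> nat \<Rightarrow> tensor \<Rightarrow> tensor \<Rightarrow> nat \<Rightarrow> tensor" where
  "arnoldi_residual n s n3 A V j = (if j = 0 then V
     else mgs n s n3 (arnoldi_V n s n3 A V) (tprod n n3 A (arnoldi_V n s n3 A V j)) j)"

lemma arnoldi_W_eq_residual:
  "arnoldi_W n s n3 A (arnoldi n s n3 A V j) = arnoldi_residual n s n3 A V (Suc j)"
proof -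
  have "mgs n s n3 (\<lambda>i. arnoldi n s n3 A V j ! (i - 1)) W (Suc j) = mgs n s n3 (arnoldi_V n s n3 A V) W (Suc j)"
    for W by (rule mgs_cong) (simp add: nth_arnoldi)
  moreover have "last (arnoldi n s n3 A V j) = arnoldi_V n s n3 A V (Suc j)"
    by (simp add: arnoldi_V_def)
  ultimately show ?thesis
    unfolding arnoldi_W_def arnoldi_residual_def length_arnoldi by simp
qed

lemma arnoldi_V_Suc:
  "arnoldi_V n s n3 A V (Suc j) = fst (normalization n s n3 (arnoldi_residual n s n3 A V j))"
  by (cases j) (simp_all add: arnoldi_V_def Let_def arnoldi_W_eq_residual arnoldi_residual_def)

lemma fslice_norm_residual_nonzero:
  assumes "no_breakdown n s n3 A V m" "j \<le> m" "k < n3"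
  shows "fslice_norm n s n3 (arnoldi_residual n s n3 A V j) k \<noteq> 0"
proof (cases j)
  case 0
  with assms show ?thesis
    by (auto simp: no_breakdown_def breakdown_def arnoldi_residual_def)
next
  case (Suc i)
  with assms have "\<not> breakdown n s n3 (arnoldi_W n s n3 A (arnoldi n s n3 A V i))"
    by (simp add: no_breakdown_def)
  with assms(3) Suc show ?thesis
    by (auto simp: breakdown_def arnoldi_W_eq_residual)
qed

lemma is_tube_arnoldi_V: "0 < j \<Longrightarrow> is_tube n3 (arnoldi_V n s n3 A V j a b)"
  using arnoldi_V_Suc[of n s n3 A V "j - 1"] is_tube_normalization by simp

lemma diff_mgs_eq_sum:
  "W - mgs n s n3 Vs W i = (\<Sum>l=1..i. tube_mult n3 (tinner n s n3 (Vs l) (mgs n s n3 Vs W (l - 1))) (Vs l))"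
proof (induction i)
  case (Suc i)
  have "W - mgs n s n3 Vs W (Suc i)
      = (W - mgs n s n3 Vs W i) + tube_mult n3 (tinner n s n3 (Vs (Suc i)) (mgs n s n3 Vs W i)) (Vs (Suc i))"
    by (simp only: mgs.simps Let_def diff_diff_eq2 diff_add_eq)
  then show ?case
    unfolding Suc.IH by simp
qed simp

lemma diff_mgs_in_tspan: "W - mgs n s n3 Vs W i \<in> tspan n3 i Vs"
  unfolding tspan_def diff_mgs_eq_sum
  by (intro CollectI exI[of _ "\<lambda>l. tinner n s n3 (Vs l) (mgs n s n3 Vs W (l - 1))"] conjI allI
      is_tube_tinner refl)

lemma slice_inner_mgs_eq_zero:
  assumes n3: "0 < n3" and k: "k < n3"
    and orth: "\<And>a b. a \<in> {1..i} \<Longrightarrow> b \<in> {1..i} \<Longrightarrow>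
      slice_inner n s (tfft n3 (Vs a)) (tfft n3 (Vs b)) k = (if a = b then 1 else 0)"
    and a: "a \<in> {1..i}"
  shows "slice_inner n s (tfft n3 (Vs a)) (tfft n3 (mgs n s n3 Vs W i)) k = 0"
  using orth a
proof (induction i arbitrary: a)
  case 0
  then show ?case
    by simp
next
  case (Suc i)
  let ?M = "mgs n s n3 Vs W i"
  let ?h = "tube_fft n3 (tinner n s n3 (Vs (Suc i)) ?M)"
  have "slice_inner n s (tfft n3 (Vs a)) (tfft n3 (mgs n s n3 Vs W (Suc i))) k
      = slice_inner n s (tfft n3 (Vs a)) (\<lambda>a b k. tfft n3 ?M a b k - ?h k * tfft n3 (Vs (Suc i)) a b k) k"
    by (rule slice_inner_cong) (simp add: Let_def tfft_diff tfft_tube_mult[OF n3 k])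
  also have "\<dots> = slice_inner n s (tfft n3 (Vs a)) (tfft n3 ?M) k
      - ?h k * slice_inner n s (tfft n3 (Vs a)) (tfft n3 (Vs (Suc i))) k"
    by (rule slice_inner_diff_scale)
  also have "\<dots> = 0"
  proof (cases "a = Suc i")
    case True
    with Suc.prems show ?thesis
      by (simp add: tube_fft_tinner[OF n3 k])
  next
    case False
    with Suc.prems have "a \<in> {1..i}"
      by auto
    with Suc.prems False show ?thesis
      using Suc.IH[of a] by simp
  qed
  finally show ?case .
qed

lemma slice_inner_normalization:
  assumes "0 < n3" "k < n3"
  shows "slice_inner n s X (tfft n3 (fst (normalization n s n3 W))) k
    = slice_inner n s X (tfft n3 W) k / complex_of_real (fslice_norm n s n3 W k)"
proof -
  have "slice_inner n s X (tfft n3 (fst (normalization n s n3 W))) k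
      = slice_inner n s X (\<lambda>i j k. tfft n3 W i j k / complex_of_real (fslice_norm n s n3 W k)) k"
    using assms by (intro slice_inner_cong) (simp add: tfft_normalization)
  also have "\<dots> = slice_inner n s X (tfft n3 W) k / complex_of_real (fslice_norm n s n3 W k)"
    by (rule slice_inner_divide)
  finally show ?thesis .
qed

lemma slice_inner_normalization_self:
  assumes "0 < n3" "k < n3" "fslice_norm n s n3 W k \<noteq> 0"
  shows "slice_inner n s (tfft n3 (fst (normalization n s n3 W))) (tfft n3 (fst (normalization n s n3 W))) k = 1"
proof -
  let ?Q = "tfft n3 (fst (normalization n s n3 W))" and ?\<nu> = "complex_of_real (fslice_norm n s n3 W k)"
  have "slice_inner n s ?Q ?Q k = slice_inner n s ?Q (tfft n3 W) k / ?\<nu>"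
    by (rule slice_inner_normalization[OF assms(1,2)])
  also have "slice_inner n s ?Q (tfft n3 W) k = cnj (slice_inner n s (tfft n3 W) ?Q k)"
    by (rule slice_inner_cnj)
  also have "slice_inner n s (tfft n3 W) ?Q k = slice_inner n s (tfft n3 W) (tfft n3 W) k / ?\<nu>"
    by (rule slice_inner_normalization[OF assms(1,2)])
  also have "slice_inner n s (tfft n3 W) (tfft n3 W) k = ?\<nu> * ?\<nu>"
    by (simp add: slice_inner_self power2_eq_square)
  finally show ?thesis
    using assms(3) by simp
qed

lemma fslice_norm_mult_tfft_normalization:
  assumes "0 < n3" "k < n3" "fslice_norm n s n3 W k \<noteq> 0"
  shows "complex_of_real (fslice_norm n s n3 W k) * tfft n3 (fst (normalization n s n3 W)) i j k = tfft n3 W i j k"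
  using assms by (simp add: tfft_normalization)

lemma slice_inner_arnoldi_V_Suc_eq_zero:
  assumes n3: "0 < n3" and k: "k < n3"
    and orth: "\<And>a b. a \<in> {1..j} \<Longrightarrow> b \<in> {1..j} \<Longrightarrow>
      slice_inner n s (tfft n3 (arnoldi_V n s n3 A V a)) (tfft n3 (arnoldi_V n s n3 A V b)) k
        = (if a = b then 1 else 0)"
    and a: "a \<in> {1..j}"
  shows "slice_inner n s (tfft n3 (arnoldi_V n s n3 A V a)) (tfft n3 (arnoldi_V n s n3 A V (Suc j))) k = 0"
proof -
  from a have "arnoldi_residual n s n3 A V j
      = mgs n s n3 (arnoldi_V n s n3 A V) (tprod n n3 A (arnoldi_V n s n3 A V j)) j"
    by (simp add: arnoldi_residual_def)
  with slice_inner_mgs_eq_zero[OF n3 k orth a]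
  have "slice_inner n s (tfft n3 (arnoldi_V n s n3 A V a)) (tfft n3 (arnoldi_residual n s n3 A V j)) k = 0"
    by simp
  then show ?thesis
    unfolding arnoldi_V_Suc by (simp add: slice_inner_normalization[OF n3 k])
qed

lemma slice_inner_arnoldi_V:
  assumes n3: "0 < n3" and nb: "no_breakdown n s n3 A V m" and k: "k < n3"
    and "a \<in> {1..m}" "b \<in> {1..m}"
  shows "slice_inner n s (tfft n3 (arnoldi_V n s n3 A V a)) (tfft n3 (arnoldi_V n s n3 A V b)) k
    = (if a = b then 1 else 0)"
proof -
  let ?G = "\<lambda>l. tfft n3 (arnoldi_V n s n3 A V l)"
  have "\<forall>a\<in>{1..j}. \<forall>b\<in>{1..j}. slice_inner n s (?G a) (?G b) k = (if a = b then 1 else 0)"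
    if "j \<le> m" for j
    using that
  proof (induction j)
    case (Suc j)
    then have IH: "\<And>a b. a \<in> {1..j} \<Longrightarrow> b \<in> {1..j} \<Longrightarrow>
        slice_inner n s (?G a) (?G b) k = (if a = b then 1 else 0)"
      by simp
    have "fslice_norm n s n3 (arnoldi_residual n s n3 A V j) k \<noteq> 0"
      using fslice_norm_residual_nonzero[OF nb _ k] Suc.prems by simp
    then have self: "slice_inner n s (?G (Suc j)) (?G (Suc j)) k = 1"
      unfolding arnoldi_V_Suc by (rule slice_inner_normalization_self[OF n3 k])
    have orth: "slice_inner n s (?G a) (?G (Suc j)) k = 0" if "a \<in> {1..j}" for a
      using slice_inner_arnoldi_V_Suc_eq_zero[OF n3 k IH that] .
    have orth': "slice_inner n s (?G (Suc j)) (?G a) k = 0" if "a \<in> {1..j}" for a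
      using orth[OF that] slice_inner_cnj[of n s "?G (Suc j)" "?G a" k] by simp
    have "{1..Suc j} = insert (Suc j) {1..j}"
      by auto
    with IH self orth orth' show ?case
      by auto
  qed simp
  with assms(4,5) show ?thesis
    by blast
qed

lemma T_orthonormal_arnoldi_V:
  "0 < n3 \<Longrightarrow> no_breakdown n s n3 A V m \<Longrightarrow> T_orthonormal n s n3 m (arnoldi_V n s n3 A V)"
  by (simp add: T_orthonormal_iff_slice_inner slice_inner_arnoldi_V)

lemma arnoldi_relation_in_fspan:
  assumes n3: "0 < n3" and r: "1 \<le> r"
    and nonzero: "\<And>k. k < n3 \<Longrightarrow> fslice_norm n s n3 (arnoldi_residual n s n3 A V r) k \<noteq> 0"
  shows "(\<lambda>i j k. slice_lmult n (tfft n3 A) (tfft n3 (arnoldi_V n s n3 A V r)) i j k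
      - complex_of_real (fslice_norm n s n3 (arnoldi_residual n s n3 A V r) k) * tfft n3 (arnoldi_V n s n3 A V (Suc r)) i j k)
      \<in> fspan n3 r (\<lambda>l. tfft n3 (arnoldi_V n s n3 A V l))"
proof -
  have "tfft n3 (tprod n n3 A (arnoldi_V n s n3 A V r) - arnoldi_residual n s n3 A V r)
      \<in> fspan n3 r (\<lambda>l. tfft n3 (arnoldi_V n s n3 A V l))"
    using tfft_in_fspan_if_in_tspan[OF n3 diff_mgs_in_tspan] r unfolding arnoldi_residual_def by simp
  then show ?thesis
    by (rule fspan_cong)
       (use n3 nonzero in \<open>simp add: tfft_diff tfft_tprod arnoldi_V_Suc fslice_norm_mult_tfft_normalization\<close>)
qed

lemma fspan_krylov_eq_fspan_arnoldi_V:
  assumes n3: "0 < n3" and V: "is_tensor n s n3 V" and nb: "no_breakdown n s n3 A V m"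
  shows "fspan n3 m (\<lambda>l. tfft n3 (tprod n n3 (tpow n n3 A (l - 1)) V))
    = fspan n3 m (\<lambda>l. tfft n3 (arnoldi_V n s n3 A V l))"
proof (rule fspan_eq_if_arnoldi_relation[where M = "tfft n3 A"
      and \<nu> = "\<lambda>r k. complex_of_real (fslice_norm n s n3 (arnoldi_residual n s n3 A V r) k)"])
  show "conj_symmetric n3 (\<lambda>k. complex_of_real (fslice_norm n s n3 (arnoldi_residual n s n3 A V r) k))" for r
    by (rule conj_symmetric_fslice_norm[OF n3])
  have nonzero: "fslice_norm n s n3 (arnoldi_residual n s n3 A V r) k \<noteq> 0" if "r \<le> m" "k < n3" for r k
    using fslice_norm_residual_nonzero[OF nb that] .
  then show "complex_of_real (fslice_norm n s n3 (arnoldi_residual n s n3 A V r) k) \<noteq> 0"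
    if "r < m" "k < n3" for r k
    using that by simp
  show "tfft n3 (tprod n n3 (tpow n n3 A (1 - 1)) V) i j k
      = complex_of_real (fslice_norm n s n3 (arnoldi_residual n s n3 A V 0) k) * tfft n3 (arnoldi_V n s n3 A V 1) i j k"
    if "k < n3" for i j k
    using that n3 V nonzero[of 0 k]
    by (simp add: tfft_tprod_tident arnoldi_V_Suc[of _ _ _ _ _ 0, simplified] fslice_norm_mult_tfft_normalization)
       (simp add: arnoldi_residual_def)
  show "tfft n3 (tprod n n3 (tpow n n3 A (Suc r - 1)) V) i j k
      = slice_lmult n (tfft n3 A) (tfft n3 (tprod n n3 (tpow n n3 A (r - 1)) V)) i j k"
    if "1 \<le> r" "k < n3" for r i j k
    using tfft_tprod_tpow[OF n3 \<open>k < n3\<close>, of n A "r - 1" V] that by simp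
  show "(\<lambda>i j k. slice_lmult n (tfft n3 A) (tfft n3 (arnoldi_V n s n3 A V r)) i j k
      - complex_of_real (fslice_norm n s n3 (arnoldi_residual n s n3 A V r) k) * tfft n3 (arnoldi_V n s n3 A V (Suc r)) i j k)
      \<in> fspan n3 r (\<lambda>l. tfft n3 (arnoldi_V n s n3 A V l))"
    if "1 \<le> r" "r < m" for r
    using that nonzero by (intro arnoldi_relation_in_fspan[OF n3]) auto
qed

theorem proposition6:
  fixes n s n3 m :: nat and A V :: tensor
  assumes "0 < n3"
    and "is_tensor n n n3 A"
    and "is_tensor n s n3 V"
    and "no_breakdown n s n3 A V m"
  shows "T_orthonormal_basis n s n3 m (arnoldi_V n s n3 A V) (tgKrylov n s n3 m A V)"
proof -
  let ?V = "arnoldi_V n s n3 A V"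
  have orthonormal: "T_orthonormal n s n3 m ?V"
    using assms(1,4) by (rule T_orthonormal_arnoldi_V)
  have "tgKrylov n s n3 m A V = tspan n3 m (\<lambda>l. tprod n n3 (tpow n n3 A (l - 1)) V)"
    unfolding tgKrylov_def tspan_def ..
  also have "\<dots> = tspan n3 m ?V"
    unfolding tspan_eq_fspan[OF assms(1)] fspan_krylov_eq_fspan_arnoldi_V[OF assms(1,3,4)] ..
  finally have span: "tspan n3 m ?V = tgKrylov n s n3 m A V" ..
  have "?V j \<in> tspan n3 m ?V" if "j \<in> {1..m}" for j
    using that by (intro tspan_base assms(1) is_tube_arnoldi_V) auto
  with orthonormal span show ?thesis
    unfolding T_orthonormal_basis_def
    using T_independent_if_T_orthonormal[OF assms(1) orthonormal] by simp
qed

end
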